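(* Let $(X,T)$ be a minimal topological dynamical system with $T$ a homeomorphism. If there are $x\ne y$ in $X$ such that $(x,y)$ is proximal for $T^{-1}$ and $\inf_{n\in\mathbb{Z}_+}d(T^nx,T^ny)>0$, then $(X,T)$ is strongly $\mathcal{F}_t$-sensitive.
   Context: A topological dynamical system: compact metric space $(X,d)$ with continuous surjection $T$; minimal means every orbit is dense. $(x,y)$ is proximal for $T^{-1}$ if $\inf_{n\ge0}d(T^{-n}x,T^{-n}y)=0$. $(X,T)$ is strongly $\mathcal{F}_t$-sensitive if there is $\delta>0$ such that for each nonempty open $U$ there are $x,y\in U$ with $\{n\in\mathbb{Z}_+:d(T^nx,T^ny)>\delta\}$ thick (containing arbitrarily long blocks of consecutive integers). *)

theory Defs
  imports "HOL-Analysis.Analysis"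
begin

definition tds :: "'a::metric_space set \<Rightarrow> ('a \<Rightarrow> 'a) \<Rightarrow> bool" where
  "tds X T \<longleftrightarrow> X \<noteq> {} \<and> compact X \<and> continuous_on X T \<and> T ` X = X"

definition minimal_tds :: "'a::metric_space set \<Rightarrow> ('a \<Rightarrow> 'a) \<Rightarrow> bool" where
  "minimal_tds X T \<longleftrightarrow> tds X T \<and>
     (\<forall>x\<in>X. closure {(T ^^ n) x | n. True} \<supseteq> X)"

definition thick :: "nat set \<Rightarrow> bool" where
  "thick S \<longleftrightarrow> (\<forall>L. \<exists>m. {m..m+L} \<subseteq> S)"

definition strongly_Ft_sensitive :: "'a::metric_space set \<Rightarrow> ('a \<Rightarrow> 'a) \<Rightarrow> bool" where
  "strongly_Ft_sensitive X T \<longleftrightarrow>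
     (\<exists>\<delta>>0. \<forall>U. openin (top_of_set X) U \<and> U \<noteq> {} \<longrightarrow>
        (\<exists>x\<in>U. \<exists>y\<in>U. thick {n. dist ((T ^^ n) x) ((T ^^ n) y) > \<delta>}))"

definition proximal_for :: "('a::metric_space \<Rightarrow> 'a) \<Rightarrow> 'a \<Rightarrow> 'a \<Rightarrow> bool" where
  "proximal_for S x y \<longleftrightarrow> (INF n::nat. dist ((S ^^ n) x) ((S ^^ n) y)) = 0"

end

theory Submission
  imports Defs
begin

text \<open>Minimality makes the sets \<open>T\<^sup>-\<^sup>j U\<close> an open cover of the compact space \<open>X\<close>; let \<open>e\<close> be a
  Lebesgue number of this cover. Proximality for \<open>T\<^sup>-\<^sup>1\<close> yields \<open>n\<close> with
  \<open>d(T\<^sup>-\<^sup>n x, T\<^sup>-\<^sup>n y) < e\<close>, so for some \<open>j\<close> both \<open>u = T\<^sup>j T\<^sup>-\<^sup>n x\<close> and \<open>v = T\<^sup>j T\<^sup>-\<^sup>n y\<close> lie in \<open>U\<close>.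
  For every \<open>k \<ge> n\<close> the pair \<open>T\<^sup>k u, T\<^sup>k v\<close> is the pair \<open>T\<^sup>k\<^sup>+\<^sup>j\<^sup>-\<^sup>n x, T\<^sup>k\<^sup>+\<^sup>j\<^sup>-\<^sup>n y\<close>, whose distance
  is at least \<open>inf\<^sub>m d(T\<^sup>m x, T\<^sup>m y) > 0\<close>; so \<open>u\<close> and \<open>v\<close> separate on a whole tail of times.\<close>

lemma funpow_in_invariant_set:
  assumes "f ` X \<subseteq> X" "w \<in> X"
  shows "(f ^^ n) w \<in> X"
  using assms by (induction n) auto

lemma continuous_on_funpow:
  assumes "continuous_on X f" "f ` X \<subseteq> X"
  shows "continuous_on X (f ^^ n)"
proof (induction n)
  case 0
  then show ?case by (simp add: continuous_on_id)
next
  case (Suc n)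
  have "(f ^^ n) ` X \<subseteq> X"
    using funpow_in_invariant_set[OF assms(2)] by blast
  then have "continuous_on X (f \<circ> (f ^^ n))"
    using Suc assms(1) by (intro continuous_on_compose) (auto intro: continuous_on_subset)
  then show ?case by simp
qed

lemma funpow_the_inv_into_in:
  assumes "T ` X = X" "inj_on T X" "w \<in> X"
  shows "(the_inv_into X T ^^ n) w \<in> X"
proof (rule funpow_in_invariant_set[OF _ assms(3)])
  show "the_inv_into X T ` X \<subseteq> X"
    using the_inv_into_into[OF assms(2), of _ X] assms(1) by auto
qed

lemma funpow_f_funpow_the_inv_into:
  assumes "T ` X = X" "inj_on T X" "w \<in> X"
  shows "(T ^^ n) ((the_inv_into X T ^^ n) w) = w"
proof (induction n)
  case 0
  then show ?case by simp
next
  case (Suc n)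
  have "(the_inv_into X T ^^ n) w \<in> T ` X"
    using funpow_the_inv_into_in[OF assms] assms(1) by simp
  then have "T (the_inv_into X T ((the_inv_into X T ^^ n) w)) = (the_inv_into X T ^^ n) w"
    using f_the_inv_into_f[OF assms(2)] by blast
  then have "(T ^^ n) (T (the_inv_into X T ((the_inv_into X T ^^ n) w))) = w"
    using Suc by simp
  then show ?case
    by (simp only: funpow_Suc_right[where f = T] funpow.simps(2)[where f = "the_inv_into X T"] comp_apply)
qed

lemma funpow_funpow_the_inv_into:
  assumes "T ` X = X" "inj_on T X" "w \<in> X" "n \<le> k"
  shows "(T ^^ k) ((the_inv_into X T ^^ n) w) = (T ^^ (k - n)) w"
proof -
  have "(T ^^ k) ((the_inv_into X T ^^ n) w)
      = (T ^^ (k - n)) ((T ^^ n) ((the_inv_into X T ^^ n) w))"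
    using assms(4) by (metis le_add_diff_inverse2 funpow_add comp_apply)
  then show ?thesis
    using funpow_f_funpow_the_inv_into[OF assms(1-3)] by simp
qed

lemma thick_if_atLeast_subset:
  assumes "{n..} \<subseteq> S"
  shows "thick S"
  unfolding thick_def by (intro allI exI[of _ n]) (use assms in auto)

lemma proximal_forD:
  assumes "proximal_for S x y" "e > 0"
  obtains n where "dist ((S ^^ n) x) ((S ^^ n) y) < e"
proof -
  have "(INF n. dist ((S ^^ n) x) ((S ^^ n) y)) < e"
    using assms unfolding proximal_for_def by simp
  then show ?thesis
    using that by (subst (asm) cINF_less_iff) (auto intro: bdd_belowI[of _ 0])
qed

lemma minimal_tds_orbit_meets_open:
  assumes "minimal_tds X T" "openin (top_of_set X) U" "U \<noteq> {}" "q \<in> X"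
  obtains j where "(T ^^ j) q \<in> U"
proof -
  obtain V where V: "open V" "U = X \<inter> V"
    using assms(2) unfolding openin_open by blast
  obtain z where z: "z \<in> U"
    using assms(3) by blast
  have "z \<in> closure {(T ^^ n) q | n. True}"
    using assms(1,4) z V(2) unfolding minimal_tds_def by blast
  then have "V \<inter> {(T ^^ n) q | n. True} \<noteq> {}"
    using open_Int_closure_eq_empty[OF V(1)] z V(2) by blast
  then obtain j where "(T ^^ j) q \<in> V"
    by blast
  moreover have "T ` X \<subseteq> X"
    using assms(1) unfolding minimal_tds_def tds_def by blast
  then have "(T ^^ j) q \<in> X"
    using assms(4) by (rule funpow_in_invariant_set)
  ultimately show ?thesis
    using that V(2) by blast
qed

lemma minimal_tds_uniform_common_return:
  assumes "minimal_tds X T" "openin (top_of_set X) U" "U \<noteq> {}"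
  obtains e where "e > 0"
    "\<And>a b. a \<in> X \<Longrightarrow> b \<in> X \<Longrightarrow> dist a b < e \<Longrightarrow> \<exists>j. (T ^^ j) a \<in> U \<and> (T ^^ j) b \<in> U"
proof -
  have tds: "compact X" "continuous_on X T" "T ` X = X"
    using assms(1) unfolding minimal_tds_def tds_def by auto
  have "openin (top_of_set X) (X \<inter> (T ^^ j) -` U)" for j
    using tds(2,3) assms(2)
    by (intro continuous_openin_preimage continuous_on_funpow) (auto intro: funpow_in_invariant_set)
  then obtain W where W: "\<And>j. open (W j)" "\<And>j. X \<inter> (T ^^ j) -` U = X \<inter> W j"
    unfolding openin_open by metis
  have "X \<subseteq> \<Union> (range W)"
  proof
    fix q assume "q \<in> X"
    then obtain j where "(T ^^ j) q \<in> U"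
      using minimal_tds_orbit_meets_open[OF assms] by blast
    then show "q \<in> \<Union> (range W)"
      using W(2)[of j] \<open>q \<in> X\<close> by blast
  qed
  then obtain e where e: "e > 0" "\<And>a. a \<in> X \<Longrightarrow> \<exists>G \<in> range W. ball a e \<subseteq> G"
    using Heine_Borel_lemma[OF tds(1)] W(1) by blast
  show ?thesis
  proof (rule that[OF e(1)])
    fix a b assume ab: "a \<in> X" "b \<in> X" "dist a b < e"
    then obtain j where "ball a e \<subseteq> W j"
      using e(2) by blast
    then have "a \<in> X \<inter> W j" "b \<in> X \<inter> W j"
      using ab e(1) by auto
    then show "\<exists>j. (T ^^ j) a \<in> U \<and> (T ^^ j) b \<in> U"
      using W(2)[of j] by blast
  qed
qed

lemma minimal_tds_open_contains_pair_separated_on_tail: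
  assumes "minimal_tds X T" "inj_on T X" "x \<in> X" "y \<in> X"
    and "proximal_for (the_inv_into X T) x y"
    and "\<And>m. d \<le> dist ((T ^^ m) x) ((T ^^ m) y)"
    and "openin (top_of_set X) U" "U \<noteq> {}"
  obtains u v n where "u \<in> U" "v \<in> U" "\<And>k. n \<le> k \<Longrightarrow> d \<le> dist ((T ^^ k) u) ((T ^^ k) v)"
proof -
  define S where "S = the_inv_into X T"
  have surj: "T ` X = X"
    using assms(1) unfolding minimal_tds_def tds_def by auto
  obtain e where e: "e > 0"
    "\<And>a b. a \<in> X \<Longrightarrow> b \<in> X \<Longrightarrow> dist a b < e \<Longrightarrow> \<exists>j. (T ^^ j) a \<in> U \<and> (T ^^ j) b \<in> U"
    using minimal_tds_uniform_common_return[OF assms(1,7,8)] by blast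
  obtain n where "dist ((S ^^ n) x) ((S ^^ n) y) < e"
    using proximal_forD[OF assms(5) e(1)] unfolding S_def by blast
  then obtain j where j: "(T ^^ j) ((S ^^ n) x) \<in> U" "(T ^^ j) ((S ^^ n) y) \<in> U"
    using e(2) funpow_the_inv_into_in[OF surj assms(2)] assms(3,4) unfolding S_def by blast
  have shift: "(T ^^ k) ((T ^^ j) ((S ^^ n) w)) = (T ^^ (k + j - n)) w" if "w \<in> X" "n \<le> k" for w k
    using funpow_funpow_the_inv_into[OF surj assms(2) that(1), of n "k + j"] that(2)
    unfolding S_def by (simp add: funpow_add)
  show ?thesis
  proof (rule that[OF j])
    fix k assume "n \<le> k"
    then show "d \<le> dist ((T ^^ k) ((T ^^ j) ((S ^^ n) x))) ((T ^^ k) ((T ^^ j) ((S ^^ n) y)))"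
      using shift assms(3,4,6) by simp
  qed
qed

theorem proposition5p12:
  fixes X :: "'a::metric_space set" and T :: "'a \<Rightarrow> 'a"
  assumes "minimal_tds X T"
    and "inj_on T X"
    and "continuous_on X (the_inv_into X T)"
    and "x \<in> X" and "y \<in> X" and "x \<noteq> y"
    and "proximal_for (the_inv_into X T) x y"
    and "(INF n::nat. dist ((T ^^ n) x) ((T ^^ n) y)) > 0"
  shows "strongly_Ft_sensitive X T"
proof -
  define d where "d = (INF n::nat. dist ((T ^^ n) x) ((T ^^ n) y))"
  have d_le: "d \<le> dist ((T ^^ m) x) ((T ^^ m) y)" for m
    unfolding d_def by (rule cINF_lower) (auto intro: bdd_belowI[of _ 0])
  have "\<exists>u\<in>U. \<exists>v\<in>U. thick {k. d / 2 < dist ((T ^^ k) u) ((T ^^ k) v)}"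
    if U: "openin (top_of_set X) U" "U \<noteq> {}" for U
  proof -
    obtain u v n where uv: "u \<in> U" "v \<in> U" "\<And>k. n \<le> k \<Longrightarrow> d \<le> dist ((T ^^ k) u) ((T ^^ k) v)"
      using minimal_tds_open_contains_pair_separated_on_tail[OF assms(1,2,4,5,7) d_le U] by blast
    then have "{n..} \<subseteq> {k. d / 2 < dist ((T ^^ k) u) ((T ^^ k) v)}"
      using assms(8) unfolding d_def by fastforce
    then show ?thesis
      using uv(1,2) thick_if_atLeast_subset by blast
  qed
  moreover have "d / 2 > 0"
    using assms(8) unfolding d_def by simp
  ultimately show ?thesis
    unfolding strongly_Ft_sensitive_def by blast
qed

end
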